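(* Let $(\mathbb{I},J)$ be the almost-complex Iwasawa manifold described in the context. Then $h^{1,0}_{\mathrm{Dol}}=1$ (spanned by $\varphi^3$), $h^{2,0}_{\mathrm{Dol}}=1$ (spanned by $i\varphi^1\wedge\varphi^3+\varphi^2\wedge\varphi^3$), and $h^{3,0}_{\mathrm{Dol}}=0$.
   Context: General notions. For an almost-complex manifold $(X,J)$, $A^k(X)=\bigoplus_{p+q=k}A^{p,q}(X)$ and $d=\mu+\partial+\overline{\partial}+\bar\mu$ with $\mu:A^{p,q}\to A^{p+2,q-1}$, $\partial:A^{p,q}\to A^{p+1,q}$, $\overline{\partial}:A^{p,q}\to A^{p,q+1}$, $\bar\mu:A^{p,q}\to A^{p-1,q+2}$. The almost-complex Dolbeault cohomology (of Cirici–Wilson) in bidegree $(p,0)$ is $H^{p,0}_{\mathrm{Dol}}(X)=\{\psi\in A^{p,0}(X):\overline{\partial}\psi=0,\ \bar\mu\psi=0\}$, and $h^{p,0}_{\mathrm{Dol}}$ is its complex dimension. The Iwasawa manifold. $\mathbb{H}_3$ is the complex Heisenberg group of matrices $\begin{pmatrix}1&z_1&z_3\\0&1&z_2\\0&0&1\end{pmatrix}$, $z_j=x_j+iy_j\in\mathbb{C}$, $\Gamma\subset\mathbb{H}_3$ the subgroup with $z_1,z_2,z_3\in\mathbb{Z}[i]$, and $\mathbb{I}=\Gamma\backslash\mathbb{H}_3$. Left-invariant real $1$-forms: $e^1=dx_1$, $e^2=dy_1$, $e^3=dx_2$, $e^4=dy_2$, $e^5=dx_3-x_1dx_2+y_1dy_2$,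 $e^6=dy_3-x_1dy_2-y_1dx_2$, with $de^1=\dots=de^4=0$, $de^5=-e^{13}+e^{24}$, $de^6=-e^{14}-e^{23}$. $J$ is the almost-complex structure whose $(1,0)$-forms are spanned by $\varphi^1=e^1+ie^6$, $\varphi^2=e^2+ie^5$, $\varphi^3=e^3+ie^4$. *)

theory Defs
  imports "HOL-Analysis.Analysis" "HOL-Library.Function_Algebras"
begin

text \<open>A point of H_3 is the triple (z1,z2,z3) of the matrix [[1,z1,z3],[0,1,z2],[0,0,1]].\<close>
type_synonym pt = "complex \<times> complex \<times> complex"

definition hmult :: "pt \<Rightarrow> pt \<Rightarrow> pt" where
  "hmult a b = (fst a + fst b, fst (snd a) + fst (snd b),
                snd (snd a) + snd (snd b) + fst a * fst (snd b))"

definition gauss_int :: "complex \<Rightarrow> bool" where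
  "gauss_int z \<longleftrightarrow> Re z \<in> \<int> \<and> Im z \<in> \<int>"

definition Gamma :: "pt set" where
  "Gamma = {(a, b, c). gauss_int a \<and> gauss_int b \<and> gauss_int c}"

fun Ck :: "nat \<Rightarrow> (pt \<Rightarrow> complex) \<Rightarrow> bool" where
  "Ck 0 f = continuous_on UNIV f"
| "Ck (Suc k) f = ((\<forall>p. f differentiable (at p)) \<and>
                    (\<forall>v. Ck k (\<lambda>p. frechet_derivative f (at p) v)))"

definition smooth_fun :: "(pt \<Rightarrow> complex) \<Rightarrow> bool" where
  "smooth_fun f \<longleftrightarrow> (\<forall>k. Ck k f)"

text \<open>Smooth complex functions on the Iwasawa manifold Gamma\textbackslash H_3 =
  smooth functions on H_3 invariant under left translation by Gamma.\<close>
definition Iw_fun :: "(pt \<Rightarrow> complex) \<Rightarrow> bool" where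
  "Iw_fun f \<longleftrightarrow> smooth_fun f \<and> (\<forall>\<gamma>\<in>Gamma. \<forall>p. f (hmult \<gamma> p) = f p)"

text \<open>Left-invariant vector fields E_1..E_6, the frame dual to e^1..e^6:
  E_i f (p) = d/dt|_0 f(p * t X_i).\<close>
definition lie_gen :: "nat \<Rightarrow> pt" where
  "lie_gen i = (if i = 1 then (1, 0, 0) else if i = 2 then (\<i>, 0, 0)
           else if i = 3 then (0, 1, 0) else if i = 4 then (0, \<i>, 0)
           else if i = 5 then (0, 0, 1) else if i = 6 then (0, 0, \<i>) else 0)"

definition Efield :: "nat \<Rightarrow> (pt \<Rightarrow> complex) \<Rightarrow> pt \<Rightarrow> complex" where
  "Efield i f p = vector_derivative (\<lambda>t::real. f (hmult p (t *\<^sub>R lie_gen i))) (at 0)"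

text \<open>A complex form is given by its coefficients w.r.t. the global coframe
  theta_0..theta_5 = phi^1, phi^2, phi^3, conj phi^1, conj phi^2, conj phi^3:
  the form is Sum_S omega(S) theta^S (S a subset of {0..5}, increasing wedge).\<close>
type_synonym form = "nat set \<Rightarrow> pt \<Rightarrow> complex"

definition cform :: "complex \<Rightarrow> form \<Rightarrow> form" where
  "cform c \<omega> = (\<lambda>S p. c * \<omega> S p)"

definition fmul :: "(pt \<Rightarrow> complex) \<Rightarrow> form \<Rightarrow> form" where
  "fmul f \<omega> = (\<lambda>S p. f p * \<omega> S p)"

definition wsign :: "nat set \<Rightarrow> nat set \<Rightarrow> complex" where
  "wsign A B = (-1) ^ card {(i, j). i \<in> A \<and> j \<in> B \<and> j < i}"

definition wedge :: "form \<Rightarrow> form \<Rightarrow> form" where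
  "wedge a b = (\<lambda>S p. \<Sum>A\<in>Pow S. wsign A (S - A) * a A p * b (S - A) p)"

definition theta :: "nat \<Rightarrow> form" where
  "theta k = (\<lambda>S p. if S = {k} then 1 else 0)"

definition one_form :: form where
  "one_form = (\<lambda>S p. if S = {} then 1 else 0)"

primrec monol :: "nat list \<Rightarrow> form" where
  "monol [] = one_form"
| "monol (k # ks) = wedge (theta k) (monol ks)"

text \<open>Real coframe e^1..e^6 (phi^1 = e^1 + i e^6, phi^2 = e^2 + i e^5, phi^3 = e^3 + i e^4).\<close>
definition e_form :: "nat \<Rightarrow> form" where
  "e_form i = (if i = 1 then cform (1/2) (theta 0 + theta 3)
          else if i = 6 then cform (1/(2*\<i>)) (theta 0 - theta 3)
          else if i = 2 then cform (1/2) (theta 1 + theta 4)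
          else if i = 5 then cform (1/(2*\<i>)) (theta 1 - theta 4)
          else if i = 3 then cform (1/2) (theta 2 + theta 5)
          else if i = 4 then cform (1/(2*\<i>)) (theta 2 - theta 5)
          else 0)"

definition de_form :: "nat \<Rightarrow> form" where
  "de_form i = (if i = 5 then - wedge (e_form 1) (e_form 3) + wedge (e_form 2) (e_form 4)
           else if i = 6 then - wedge (e_form 1) (e_form 4) - wedge (e_form 2) (e_form 3)
           else 0)"

definition dtheta :: "nat \<Rightarrow> form" where
  "dtheta k = (if k = 0 then de_form 1 + cform \<i> (de_form 6)
          else if k = 1 then de_form 2 + cform \<i> (de_form 5)
          else if k = 2 then de_form 3 + cform \<i> (de_form 4)
          else if k = 3 then de_form 1 - cform \<i> (de_form 6)
          else if k = 4 then de_form 2 - cform \<i> (de_form 5)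
          else if k = 5 then de_form 3 - cform \<i> (de_form 4)
          else 0)"

primrec dmonol :: "nat list \<Rightarrow> form" where
  "dmonol [] = 0"
| "dmonol (k # ks) = wedge (dtheta k) (monol ks) - wedge (theta k) (dmonol ks)"

definition dfun :: "(pt \<Rightarrow> complex) \<Rightarrow> form" where
  "dfun f = (\<Sum>i\<in>{1..6}. fmul (Efield i f) (e_form i))"

definition dform :: "form \<Rightarrow> form" where
  "dform \<omega> = (\<Sum>S\<in>Pow {0..<6}.
      wedge (dfun (\<omega> S)) (monol (sorted_list_of_set S))
      + fmul (\<omega> S) (dmonol (sorted_list_of_set S)))"

definition of_type :: "nat \<Rightarrow> nat \<Rightarrow> nat set \<Rightarrow> bool" where
  "of_type p q S \<longleftrightarrow> S \<subseteq> {0..<6} \<and> card (S \<inter> {0,1,2}) = p \<and> card (S \<inter> {3,4,5}) = q"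

definition pq_form :: "nat \<Rightarrow> nat \<Rightarrow> form \<Rightarrow> bool" where
  "pq_form p q \<omega> \<longleftrightarrow> (\<forall>S. \<not> of_type p q S \<longrightarrow> \<omega> S = (\<lambda>_. 0)) \<and> (\<forall>S. Iw_fun (\<omega> S))"

definition proj :: "nat \<Rightarrow> nat \<Rightarrow> form \<Rightarrow> form" where
  "proj p q \<omega> = (\<lambda>S. if of_type p q S then \<omega> S else (\<lambda>_. 0))"

definition dbar :: "nat \<Rightarrow> nat \<Rightarrow> form \<Rightarrow> form" where
  "dbar p q \<omega> = proj p (Suc q) (dform \<omega>)"

definition mubar :: "nat \<Rightarrow> nat \<Rightarrow> form \<Rightarrow> form" where
  "mubar p q \<omega> = proj (p - 1) (q + 2) (dform \<omega>)"

definition H_Dol_p0 :: "nat \<Rightarrow> form set" where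
  "H_Dol_p0 p = {\<psi>. pq_form p 0 \<psi> \<and> dbar p 0 \<psi> = 0 \<and> mubar p 0 \<psi> = 0}"

definition h_Dol_p0 :: "nat \<Rightarrow> nat" where
  "h_Dol_p0 p = vector_space.dim cform (H_Dol_p0 p)"

end

theory Submission
  imports Defs "HOL-Complex_Analysis.Complex_Analysis"
begin

(* Expanding d of a (p,0)-form through the structure equations, the condition mubar = 0
   gives linear relations among the coefficients, and dbar = 0 says that each coefficient is
   killed by the antiholomorphic fields Zbar_j up to such zeroth-order terms. Coefficients
   are Gamma-invariant and hence bounded; on every complex line an equation Zbar_j g = const
   makes g minus a linear term holomorphic of linear growth, so Liouville forces g to be
   constant and the constant to be 0. What survives are the constant multiples of phi^3 and
   of i phi^13 + phi^23, both d-closed, and nothing in degree 3. *)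

section \<open>Wedge products of coordinate forms\<close>

definition single_form :: "nat set \<Rightarrow> (pt \<Rightarrow> complex) \<Rightarrow> form" where
  "single_form T g = (\<lambda>S. if S = T then g else (\<lambda>_. 0))"

lemma single_form_apply: "single_form T g S x = (if S = T then g x else 0)"
  by (simp add: single_form_def)

lemma theta_eq_single_form: "theta k = single_form {k} (\<lambda>_. 1)"
  by (auto simp: theta_def single_form_def fun_eq_iff)

lemma one_form_eq_single_form: "one_form = single_form {} (\<lambda>_. 1)"
  by (auto simp: one_form_def single_form_def fun_eq_iff)

lemma wedge_single_form:
  assumes "finite A" "finite B"
  shows "wedge (single_form A g) (single_form B h) =
         (if A \<inter> B = {} then single_form (A \<union> B) (\<lambda>x. wsign A B * g x * h x) else 0)"
proof (intro ext)
  fix S x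
  show "wedge (single_form A g) (single_form B h) S x =
        (if A \<inter> B = {} then single_form (A \<union> B) (\<lambda>x. wsign A B * g x * h x) else 0) S x"
  proof (cases "A \<inter> B = {} \<and> S = A \<union> B")
    case True
    then have "S - A = B" by blast
    then have "wedge (single_form A g) (single_form B h) S x =
          (\<Sum>A'\<in>Pow S. if A' = A then wsign A B * g x * h x else 0)"
      unfolding wedge_def single_form_def by (intro sum.cong) auto
    also have "\<dots> = wsign A B * g x * h x"
      using True assms by (simp add: sum.delta)
    finally show ?thesis using True by (simp add: single_form_def)
  next
    case False
    have "wedge (single_form A g) (single_form B h) S x = (\<Sum>A'\<in>Pow S. 0)"
      unfolding wedge_def single_form_def by (intro sum.cong) (use False in auto)
    then show ?thesis using False by (auto simp: single_form_def)
  qed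
qed

lemma wedge_add_left: "wedge (a + b) c = wedge a c + wedge b c"
  by (auto simp: wedge_def fun_eq_iff algebra_simps sum.distrib)
lemma wedge_add_right: "wedge a (b + c) = wedge a b + wedge a c"
  by (auto simp: wedge_def fun_eq_iff algebra_simps sum.distrib)
lemma wedge_diff_left: "wedge (a - b) c = wedge a c - wedge b c"
  by (auto simp: wedge_def fun_eq_iff algebra_simps sum_subtractf)
lemma wedge_diff_right: "wedge a (b - c) = wedge a b - wedge a c"
  by (auto simp: wedge_def fun_eq_iff algebra_simps sum_subtractf)
lemma wedge_uminus_left: "wedge (- a) c = - wedge a c"
  by (auto simp: wedge_def fun_eq_iff sum_negf)
lemma wedge_zero_left: "wedge 0 c = 0"
  by (auto simp: wedge_def fun_eq_iff)
lemma wedge_zero_right: "wedge a 0 = 0"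
  by (auto simp: wedge_def fun_eq_iff)
lemma wedge_cform_left: "wedge (cform k a) c = cform k (wedge a c)"
  by (auto simp: wedge_def cform_def fun_eq_iff sum_distrib_left algebra_simps)
lemma wedge_cform_right: "wedge a (cform k c) = cform k (wedge a c)"
  by (auto simp: wedge_def cform_def fun_eq_iff sum_distrib_left algebra_simps)
lemma wedge_fmul_left: "wedge (fmul f a) c = fmul f (wedge a c)"
  by (auto simp: wedge_def fmul_def fun_eq_iff sum_distrib_left algebra_simps)

lemmas wedge_bilinear = wedge_add_left wedge_add_right wedge_diff_left wedge_diff_right
  wedge_uminus_left wedge_zero_left wedge_zero_right
  wedge_cform_left wedge_cform_right wedge_fmul_left

definition num_below :: "nat \<Rightarrow> nat set \<Rightarrow> nat" where
  "num_below a B = card {j\<in>B. j < a}"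

lemma num_below_empty: "num_below a {} = 0"
  by (simp add: num_below_def)

lemma num_below_insert:
  assumes "b \<notin> B" "finite B"
  shows "num_below a (insert b B) = (if b < a then Suc (num_below a B) else num_below a B)"
proof -
  have "{j\<in>insert b B. j < a} = (if b < a then insert b {j\<in>B. j < a} else {j\<in>B. j < a})"
    by auto
  then show ?thesis using assms by (simp add: num_below_def)
qed

lemma wsign_empty: "wsign {} B = 1"
  by (simp add: wsign_def)

lemma wsign_insert:
  assumes "a \<notin> A" "finite A" "finite B"
  shows "wsign (insert a A) B = (-1) ^ num_below a B * wsign A B"
proof -
  let ?P = "\<lambda>A. {(i, j). i \<in> A \<and> j \<in> B \<and> j < i}"
  have fin: "finite (?P A)"
    by (rule finite_subset[of _ "A \<times> B"]) (use assms in auto)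
  have eq: "?P (insert a A) = (\<lambda>j. (a, j)) ` {j\<in>B. j < a} \<union> ?P A" by auto
  have disj: "(\<lambda>j. (a, j)) ` {j\<in>B. j < a} \<inter> ?P A = {}" using assms(1) by auto
  have "card (?P (insert a A)) = card {j\<in>B. j < a} + card (?P A)"
    unfolding eq
    by (subst card_Un_disjoint) (use disj fin assms in \<open>auto simp: card_image inj_on_def\<close>)
  then show ?thesis by (simp add: wsign_def power_add num_below_def)
qed

lemmas wsign_simps = wsign_insert wsign_empty num_below_insert num_below_empty

section \<open>The exterior derivative on (p,0)-forms\<close>

definition supported_on :: "nat set set \<Rightarrow> form \<Rightarrow> bool" where
  "supported_on TT \<omega> \<longleftrightarrow> (\<forall>T. T \<notin> TT \<longrightarrow> \<omega> T = (\<lambda>_. 0))"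

lemma fmul_zero: "fmul (\<lambda>_. 0) \<omega> = 0"
  by (simp add: fmul_def fun_eq_iff)

lemma dfun_zero: "dfun (\<lambda>_. 0) = 0"
  by (simp add: dfun_def Efield_def fmul_def fun_eq_iff)

lemma dform_supported_on:
  assumes "supported_on TT \<omega>" "TT \<subseteq> Pow {0..<6}"
  shows "dform \<omega> = (\<Sum>T\<in>TT. wedge (dfun (\<omega> T)) (monol (sorted_list_of_set T))
      + fmul (\<omega> T) (dmonol (sorted_list_of_set T)))"
proof -
  have "\<omega> T = (\<lambda>_. 0)" if "T \<notin> TT" for T
    using assms(1) that by (simp add: supported_on_def)
  then show ?thesis
    unfolding dform_def
    by (intro sum.mono_neutral_right)
       (use assms(2) in \<open>auto simp: dfun_zero fmul_zero wedge_zero_left\<close>)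
qed

lemma dfun_expand: "dfun f = fmul (Efield 1 f) (e_form 1) + fmul (Efield 2 f) (e_form 2)
  + fmul (Efield 3 f) (e_form 3) + fmul (Efield 4 f) (e_form 4) + fmul (Efield 5 f) (e_form 5)
  + fmul (Efield 6 f) (e_form 6)"
proof -
  have "{1..6::nat} = {1,2,3,4,5,6}" by auto
  then show ?thesis by (simp add: dfun_def add_ac)
qed

text \<open>\<open>Zbar j\<close> is the vector field dual to \<open>theta (j + 3)\<close>, the conjugate of \<open>phi^(j+1)\<close>.\<close>
definition Zbar :: "nat \<Rightarrow> (pt \<Rightarrow> complex) \<Rightarrow> pt \<Rightarrow> complex" where
  "Zbar j f x = (Efield (j + 1) f x + \<i> * Efield (6 - j) f x) / 2"

lemma Zbar_simps:
  "Zbar 0 f x = (Efield 1 f x + \<i> * Efield 6 f x) / 2"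
  "Zbar 1 f x = (Efield 2 f x + \<i> * Efield 5 f x) / 2"
  "Zbar 2 f x = (Efield 3 f x + \<i> * Efield 4 f x) / 2"
  by (simp_all add: Zbar_def numeral_eq_Suc)

lemmas dform_expand_simps = dfun_expand dtheta_def de_form_def e_form_def theta_eq_single_form
  one_form_eq_single_form wedge_bilinear wedge_single_form
text \<open>\<open>One_nat_def\<close> is a simp rule, so the simplifier meets \<open>Zbar (Suc 0)\<close>.\<close>
lemmas coeff_eval_simps = wsign_simps cform_def fmul_def single_form_apply set_eq_subset
  Zbar_simps Zbar_simps(2)[unfolded One_nat_def]

lemma dform_10_coeffs:
  assumes "supported_on {{0},{1},{2}} \<psi>"
  shows "dform \<psi> {1,3} x = - Zbar 0 (\<psi> {1}) x"
    and "dform \<psi> {1,4} x = - Zbar 1 (\<psi> {1}) x"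
    and "dform \<psi> {1,5} x = - Zbar 2 (\<psi> {1}) x - (\<i> * \<psi> {0} x + \<psi> {1} x) / 4"
    and "dform \<psi> {2,3} x = - Zbar 0 (\<psi> {2}) x + (\<psi> {0} x + \<i> * \<psi> {1} x) / 4"
    and "dform \<psi> {2,4} x = - Zbar 1 (\<psi> {2}) x + (\<i> * \<psi> {0} x - \<psi> {1} x) / 4"
    and "dform \<psi> {2,5} x = - Zbar 2 (\<psi> {2}) x"
    and "dform \<psi> {3,5} x = (\<psi> {0} x - \<i> * \<psi> {1} x) / 4"
  using assms
  apply (simp_all add: dform_supported_on dform_expand_simps)
  apply (simp_all add: coeff_eval_simps)
  apply (simp_all add: algebra_simps add_divide_distrib diff_divide_distrib)
  done

lemma sorted_list_of_set_pair: "a < b \<Longrightarrow> sorted_list_of_set {a, b} = [a, b]"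
  by (simp add: sorted_list_of_set_insert_remove less_imp_le)

lemma dform_20_coeffs:
  assumes "supported_on {{0,1},{0,2},{1,2}} \<psi>"
  shows "dform \<psi> {1,2,3} x = Zbar 0 (\<psi> {1,2}) x + \<psi> {0,1} x / 4"
    and "dform \<psi> {1,2,4} x = Zbar 1 (\<psi> {1,2}) x + \<i> * \<psi> {0,1} x / 4"
    and "dform \<psi> {1,2,5} x = Zbar 2 (\<psi> {1,2}) x + (\<i> * \<psi> {0,2} x + \<psi> {1,2} x) / 4"
    and "dform \<psi> {0,3,5} x = \<i> * \<psi> {0,1} x / 4"
    and "dform \<psi> {2,3,5} x = (\<psi> {0,2} x - \<i> * \<psi> {1,2} x) / 4"
  using assms
  apply (simp_all add: dform_supported_on doubleton_eq_iff sorted_list_of_set_pair dform_expand_simps)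
  apply (simp_all add: coeff_eval_simps)
  apply (simp_all add: algebra_simps add_divide_distrib diff_divide_distrib)
  done

lemma dform_30_coeff:
  assumes "supported_on {{0,1,2}} \<psi>"
  shows "dform \<psi> {0,2,3,5} x = \<i> * \<psi> {0,1,2} x / 4"
  using assms
  apply (simp add: dform_supported_on dform_expand_simps)
  apply (simp add: coeff_eval_simps)
  done

lemma dform_constant_coeffs:
  assumes "supported_on TT \<omega>" "TT \<subseteq> Pow {0..<6}" "\<And>T. T \<in> TT \<Longrightarrow> \<omega> T = (\<lambda>_. c T)"
  shows "dform \<omega> = (\<Sum>T\<in>TT. cform (c T) (dmonol (sorted_list_of_set T)))"
proof -
  have "dfun (\<lambda>_. a) = 0" for a
    by (simp add: dfun_def Efield_def fmul_def fun_eq_iff)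
  then show ?thesis
    unfolding dform_supported_on[OF assms(1,2)]
    by (intro sum.cong) (auto simp: assms(3) wedge_zero_left fmul_def cform_def)
qed

definition dol_20_generator :: form where
  "dol_20_generator = cform \<i> (wedge (theta 0) (theta 2)) + wedge (theta 1) (theta 2)"

lemma dol_20_generator_apply:
  "dol_20_generator S x = (if S = {0,2} then \<i> else if S = {1,2} then 1 else 0)"
  unfolding dol_20_generator_def theta_eq_single_form
  by (simp add: wedge_bilinear wedge_single_form; simp add: coeff_eval_simps insert_commute)

lemma dform_theta2_closed: "dform (cform \<gamma> (theta 2)) = 0"
proof -
  have "dform (cform \<gamma> (theta 2)) = cform \<gamma> (dmonol [2])"
    by (subst dform_constant_coeffs[where TT = "{{2}}" and c = "\<lambda>_. \<gamma>"])
       (auto simp: supported_on_def cform_def theta_def fun_eq_iff)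
  also have "\<dots> = 0"
    by (simp add: dtheta_def de_form_def wedge_bilinear) (simp add: cform_def fun_eq_iff)
  finally show ?thesis .
qed

lemma dform_dol_20_generator_closed: "dform (cform \<gamma> dol_20_generator) = 0"
proof -
  have "dform (cform \<gamma> dol_20_generator) = cform (\<i> * \<gamma>) (dmonol [0,2]) + cform \<gamma> (dmonol [1,2])"
    by (subst dform_constant_coeffs[where TT = "{{0,2},{1,2}}" and c = "\<lambda>T. if T = {0,2} then \<i> * \<gamma> else \<gamma>"])
       (auto simp: supported_on_def cform_def dol_20_generator_apply fun_eq_iff set_eq_subset)
  also have "\<dots> = 0"
    apply (simp add: dform_expand_simps)
    apply (simp add: coeff_eval_simps fun_eq_iff)
    apply (simp add: algebra_simps)
    done
  finally show ?thesis .
qed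

section \<open>Bounded functions killed by the antiholomorphic fields\<close>

lemma Ck_const: "Ck k (\<lambda>_. c)"
  by (induction k arbitrary: c) simp_all

lemma Iw_fun_const: "Iw_fun (\<lambda>_. c)"
  by (simp add: Iw_fun_def smooth_fun_def Ck_const)

lemma Iw_fun_has_derivative:
  assumes "Iw_fun f"
  shows "(f has_derivative frechet_derivative f (at q)) (at q)"
proof -
  have "Ck (Suc 0) f" using assms unfolding Iw_fun_def smooth_fun_def by blast
  then have "f differentiable (at q)" by (simp only: Ck.simps)
  then show ?thesis by (simp only: frechet_derivative_works)
qed

lemma Efield_eq_frechet_derivative:
  assumes "Iw_fun f"
  shows "Efield i f q = frechet_derivative f (at q) (hmult q (lie_gen i) - q)"
proof -
  define w where "w = hmult q (lie_gen i) - q"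
  define D where "D = frechet_derivative f (at q)"
  have D: "(f has_derivative D) (at q)"
    unfolding D_def by (rule Iw_fun_has_derivative[OF assms])
  have path: "hmult q (t *\<^sub>R lie_gen i) = q + t *\<^sub>R w" for t :: real
    by (cases q) (auto simp: hmult_def w_def algebra_simps scaleR_conv_of_real)
  have "((\<lambda>t::real. q + t *\<^sub>R w) has_derivative (\<lambda>t. t *\<^sub>R w)) (at 0)"
    by (intro derivative_eq_intros) auto
  from diff_chain_at[OF this] D
  have "((\<lambda>t::real. f (q + t *\<^sub>R w)) has_derivative (\<lambda>t. D (t *\<^sub>R w))) (at 0)"
    by (simp add: o_def)
  moreover have "linear D"
    using D has_derivative_linear by blast
  ultimately have "((\<lambda>t::real. f (q + t *\<^sub>R w)) has_vector_derivative D w) (at 0)"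
    unfolding has_vector_derivative_def by (simp add: linear_scale)
  then show ?thesis
    unfolding Efield_def path D_def[symmetric] w_def[symmetric] by (rule vector_derivative_at)
qed

lemma hmult_diff_self: "hmult q X - q = (fst X, fst (snd X), snd (snd X) + fst q * fst (snd X))"
  by (simp add: hmult_def prod_eq_iff)

lemma Efield_frechet_simps:
  assumes "Iw_fun f"
  shows "Efield 1 f q = frechet_derivative f (at q) (1,0,0)"
    and "Efield 2 f q = frechet_derivative f (at q) (\<i>,0,0)"
    and "Efield 3 f q = frechet_derivative f (at q) (0,1,fst q)"
    and "Efield 4 f q = frechet_derivative f (at q) (0,\<i>,fst q * \<i>)"
    and "Efield 5 f q = frechet_derivative f (at q) (0,0,1)"
    and "Efield 6 f q = frechet_derivative f (at q) (0,0,\<i>)"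
  by (simp_all add: Efield_eq_frechet_derivative[OF assms] lie_gen_def hmult_diff_self)

definition gauss_floor :: "complex \<Rightarrow> complex" where
  "gauss_floor z = of_int \<lfloor>Re z\<rfloor> + \<i> * of_int \<lfloor>Im z\<rfloor>"

lemma gauss_int_uminus_gauss_floor: "gauss_int (- gauss_floor z)"
  by (simp add: gauss_int_def gauss_floor_def)

lemma diff_gauss_floor_in_unit_square: "z - gauss_floor z \<in> cbox 0 (1 + \<i>)"
  by (simp add: in_cbox_complex_iff gauss_floor_def) linarith

text \<open>Every point is moved by some element of \<open>Gamma\<close> into the compact box
  \<open>C \<times> C \<times> C\<close>, \<open>C\<close> the unit square; so a continuous \<open>Gamma\<close>-invariant function is bounded.\<close>
lemma Iw_fun_bounded:
  assumes "Iw_fun f"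
  obtains M where "\<And>q. norm (f q) \<le> M"
proof -
  define C :: "complex set" where "C = cbox 0 (1 + \<i>)"
  have "Ck 0 f" using assms by (simp only: Iw_fun_def smooth_fun_def)
  then have "continuous_on UNIV f" by simp
  then have "compact (f ` (C \<times> C \<times> C))"
    unfolding C_def
    by (intro compact_continuous_image compact_Times compact_cbox) (auto intro: continuous_on_subset)
  then obtain M where M: "\<And>y. y \<in> f ` (C \<times> C \<times> C) \<Longrightarrow> norm y \<le> M"
    using compact_imp_bounded bounded_iff by metis
  have "norm (f q) \<le> M" for q
  proof -
    obtain z1 z2 z3 where q: "q = (z1, z2, z3)" by (cases q)
    define g1 where "g1 = - gauss_floor z1"
    define g3 where "g3 = - gauss_floor (z3 + g1 * z2)"
    define \<gamma> where "\<gamma> = (g1, - gauss_floor z2, g3)"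
    have "\<gamma> \<in> Gamma"
      by (simp add: Gamma_def \<gamma>_def g1_def g3_def gauss_int_uminus_gauss_floor)
    then have "f (hmult \<gamma> q) = f q"
      using assms unfolding Iw_fun_def by blast
    moreover have "hmult \<gamma> q \<in> C \<times> C \<times> C"
    proof -
      have "hmult \<gamma> q = (z1 - gauss_floor z1, z2 - gauss_floor z2,
          (z3 + g1 * z2) - gauss_floor (z3 + g1 * z2))"
        by (simp add: hmult_def q \<gamma>_def g1_def g3_def algebra_simps)
      then show ?thesis by (simp add: C_def diff_gauss_floor_in_unit_square)
    qed
    ultimately show ?thesis using M by (metis image_eqI)
  qed
  then show ?thesis by (rule that)
qed

lemma bounded_line_slope_zero:
  fixes a b :: complex
  assumes "\<And>t::real. norm (a + b * of_real t) \<le> M"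
  shows "b = 0"
proof (rule ccontr)
  assume b: "b \<noteq> 0"
  define t where "t = (M + norm a + 1) / norm b"
  have "norm (b * of_real t) \<le> norm (a + b * of_real t) + norm a"
    by (metis add_diff_cancel_left' norm_triangle_ineq4 add.commute)
  also have "\<dots> \<le> M + norm a" using assms[of t] by simp
  finally have "norm b * \<bar>t\<bar> \<le> M + norm a" by (simp add: norm_mult)
  moreover have "0 \<le> M" using assms[of 0] norm_ge_zero order_trans by blast
  then have "norm b * \<bar>t\<bar> = M + norm a + 1" using b by (simp add: t_def)
  ultimately show False by simp
qed

text \<open>Along the real plane \<open>\<zeta> \<mapsto> q + Re \<zeta> u + Im \<zeta> w\<close> the hypothesis makes
  \<open>g - \<kappa> Re \<zeta>\<close> holomorphic in \<open>\<zeta>\<close> with linear growth, hence affine by Liouville;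
  boundedness of \<open>g\<close> then kills both the slope and \<open>\<kappa>\<close>.\<close>
lemma bounded_slice_Liouville:
  fixes g :: "'a::real_normed_vector \<Rightarrow> complex"
  assumes der: "\<And>q. (g has_derivative D q) (at q)"
    and bnd: "\<And>q. norm (g q) \<le> M"
    and eq: "\<And>q. D q u + \<i> * D q w = \<kappa>"
  shows "\<kappa> = 0 \<and> D q u = 0 \<and> D q w = 0"
proof -
  have lin: "linear (D q')" for q' using der has_derivative_linear by blast
  define P where "P \<zeta> = q + Re \<zeta> *\<^sub>R u + Im \<zeta> *\<^sub>R w" for \<zeta>
  define H where "H \<zeta> = g (P \<zeta>) - \<kappa> * of_real (Re \<zeta>)" for \<zeta>
  have Hder: "(H has_field_derivative (- \<i> * D (P \<zeta>) w)) (at \<zeta>)" for \<zeta>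
  proof -
    have "(P has_derivative (\<lambda>h. Re h *\<^sub>R u + Im h *\<^sub>R w)) (at \<zeta>)"
      unfolding P_def by (intro derivative_eq_intros) auto
    from diff_chain_at[OF this der]
    have "(H has_derivative (\<lambda>h. D (P \<zeta>) (Re h *\<^sub>R u + Im h *\<^sub>R w) - \<kappa> * of_real (Re h))) (at \<zeta>)"
      unfolding H_def o_def by (intro derivative_eq_intros) auto
    moreover have "(\<lambda>h. D (P \<zeta>) (Re h *\<^sub>R u + Im h *\<^sub>R w) - \<kappa> * of_real (Re h)) = (*) (- \<i> * D (P \<zeta>) w)"
    proof
      fix h :: complex
      have "D (P \<zeta>) (Re h *\<^sub>R u + Im h *\<^sub>R w) = of_real (Re h) * D (P \<zeta>) u + of_real (Im h) * D (P \<zeta>) w"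
        using linear_add[OF lin] linear_scale[OF lin] by (simp add: scaleR_conv_of_real)
      also have "\<dots> = of_real (Re h) * (\<kappa> - \<i> * D (P \<zeta>) w) + of_real (Im h) * D (P \<zeta>) w"
        using eq[of "P \<zeta>"] by (simp add: eq_diff_eq)
      finally show "D (P \<zeta>) (Re h *\<^sub>R u + Im h *\<^sub>R w) - \<kappa> * of_real (Re h) = - \<i> * D (P \<zeta>) w * h"
        by (subst (4) complex_eq) (simp add: algebra_simps)
    qed
    ultimately show ?thesis by (simp only: has_field_derivative_def)
  qed
  then have holo: "H holomorphic_on UNIV"
    by (auto simp: holomorphic_on_def field_differentiable_def)
  have M0: "0 \<le> M" using bnd[of q] norm_ge_zero order_trans by blast
  have affine: "H \<xi> = H 0 + deriv H 0 * \<xi>" for \<xi>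
  proof -
    have "H \<xi> = (\<Sum>k\<le>1. (deriv ^^ k) H 0 / fact k * \<xi> ^ k)"
    proof (rule Liouville_polynomial[OF holo, of 1 "M + norm \<kappa>"])
      fix z :: complex assume z: "1 \<le> norm z"
      have "norm (H z) \<le> M + norm \<kappa> * norm z"
        unfolding H_def using bnd[of "P z"] abs_Re_le_cmod[of z]
        by (intro order_trans[OF norm_triangle_ineq4] add_mono)
           (auto simp: norm_mult intro: mult_left_mono)
      also have "\<dots> \<le> (M + norm \<kappa>) * norm z ^ 1"
        using M0 z mult_left_mono[of 1 "norm z" M] by (simp add: algebra_simps)
      finally show "norm (H z) \<le> (M + norm \<kappa>) * norm z ^ 1" .
    qed
    then show ?thesis by simp
  qed
  define d where "d = deriv H 0"
  have gP: "g (P \<xi>) = H 0 + d * \<xi> + \<kappa> * of_real (Re \<xi>)" for \<xi>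
    using affine[of \<xi>] by (simp add: H_def d_def diff_eq_eq)
  have "d + \<kappa> = 0"
    by (rule bounded_line_slope_zero[of "H 0" _ M])
       (use bnd[of "P (of_real t)" for t] gP[of "of_real t" for t] in \<open>simp add: algebra_simps\<close>)
  moreover have "d * \<i> = 0"
    by (rule bounded_line_slope_zero[of "H 0" _ M])
       (use bnd[of "P (\<i> * of_real t)" for t] gP[of "\<i> * of_real t" for t] in \<open>simp add: algebra_simps\<close>)
  ultimately have "d = 0" "\<kappa> = 0" by auto
  then have "H = (\<lambda>_. H 0)" using affine by (auto simp: d_def)
  then have "(H has_field_derivative 0) (at 0)" by (metis DERIV_const)
  with Hder[of 0] have "- \<i> * D (P 0) w = 0" by (rule DERIV_unique)
  then have "D q w = 0" by (simp add: P_def)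
  then show ?thesis using eq[of q] \<open>\<kappa> = 0\<close> by simp
qed

lemma Iw_fun_Zbar_constant_eq_zero:
  assumes g: "Iw_fun g" and Z: "\<And>x. Zbar 0 g x = \<kappa>"
  shows "\<kappa> = 0"
proof -
  obtain M where M: "\<And>q. norm (g q) \<le> M" using Iw_fun_bounded[OF g] by blast
  have "frechet_derivative g (at q) (1,0,0) + \<i> * frechet_derivative g (at q) (0,0,\<i>) = 2 * \<kappa>" for q
    using Z[of q] unfolding Zbar_simps Efield_frechet_simps[OF g] by simp
  from bounded_slice_Liouville[OF Iw_fun_has_derivative[OF g] M this] show ?thesis by simp
qed

lemma Iw_fun_Zbar_zero_imp_constant:
  assumes g: "Iw_fun g"
    and Z0: "\<And>x. Zbar 0 g x = 0" and Z1: "\<And>x. Zbar 1 g x = 0" and Z2: "\<And>x. Zbar 2 g x = 0"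
  obtains c where "g = (\<lambda>_. c)"
proof -
  define D where "D q = frechet_derivative g (at q)" for q
  have der: "(g has_derivative D q) (at q)" for q
    unfolding D_def by (rule Iw_fun_has_derivative[OF g])
  then have lin: "linear (D q)" for q using has_derivative_linear by blast
  obtain M where M: "\<And>q. norm (g q) \<le> M" using Iw_fun_bounded[OF g] by blast
  note Efield = Efield_frechet_simps[OF g, folded D_def]
  have "D q (1,0,0) + \<i> * D q (0,0,\<i>) = 0" for q
    using Z0[of q] unfolding Zbar_simps Efield by simp
  from bounded_slice_Liouville[OF der M this]
  have A: "D q (1,0,0) = 0" "D q (0,0,\<i>) = 0" for q by blast+
  have "D q (\<i>,0,0) + \<i> * D q (0,0,1) = 0" for q
    using Z1[of q] unfolding Zbar_simps Efield by simp
  from bounded_slice_Liouville[OF der M this]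
  have B: "D q (\<i>,0,0) = 0" "D q (0,0,1) = 0" for q by blast+
  have vertical: "D q (0,0,z) = 0" for q z
  proof -
    have "Re z *\<^sub>R 1 + Im z *\<^sub>R \<i> = z" by (simp add: complex_eq_iff)
    then have "D q (0,0,z) = D q (Re z *\<^sub>R (0, 0, 1) + Im z *\<^sub>R (0, 0, \<i>))" by simp
    also have "\<dots> = 0"
      by (simp only: linear_add[OF lin] linear_scale[OF lin] A B) simp
    finally show ?thesis .
  qed
  have shift: "D q (0, a, b) = D q (0, a, 0)" for q a b
  proof -
    have "D q (0, a, b) = D q ((0, a, 0) + (0, 0, b))" by simp
    also have "\<dots> = D q (0, a, 0)" by (simp only: linear_add[OF lin] vertical) simp
    finally show ?thesis .
  qed
  have "D q (0,1,0) + \<i> * D q (0,\<i>,0) = 0" for q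
    using Z2[of q] unfolding Zbar_simps Efield shift[of q 1 "fst q"] shift[of q \<i> "fst q * \<i>"] by simp
  from bounded_slice_Liouville[OF der M this]
  have C: "D q (0,1,0) = 0" "D q (0,\<i>,0) = 0" for q by blast+
  have "D q = (\<lambda>_. 0)" for q
  proof (rule linear_eq_stdbasis[OF lin linear_zero])
    fix b :: pt assume "b \<in> Basis"
    then have "b \<in> {(1,0,0), (\<i>,0,0), (0,1,0), (0,\<i>,0), (0,0,1), (0,0,\<i>)}"
      by (auto simp: Basis_prod_def Basis_complex_def zero_prod_def)
    then show "D q b = 0" using A[of q] B[of q] C[of q] by auto
  qed
  then have "(g has_derivative (\<lambda>_. 0)) (at x within UNIV)" for x
    using der by metis
  then obtain c where "\<forall>x\<in>UNIV. g x = c"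
    using has_derivative_zero_constant[OF convex_UNIV] by blast
  then have "g = (\<lambda>_. c)" by auto
  then show ?thesis by (rule that)
qed

section \<open>Dolbeault cohomology in bidegree (p,0)\<close>

interpretation cf: vector_space cform
  by unfold_locales (auto simp: cform_def fun_eq_iff algebra_simps)

lemma of_type_p0_imp:
  assumes "of_type p 0 S"
  shows "S \<in> Pow {0,1,2} \<and> card S = p"
proof -
  have "S \<subseteq> {0..<6}" "card (S \<inter> {3,4,5}) = 0" using assms by (simp_all add: of_type_def)
  moreover have "{0..<6::nat} = {0,1,2,3,4,5}" by auto
  ultimately have "S \<in> Pow {0,1,2}" by (auto simp: finite_subset)
  then show ?thesis using assms by (simp add: of_type_def Int_absorb2)
qed

lemma supported_on_pq_form_p0:
  assumes "pq_form p 0 \<psi>" "\<And>T. T \<in> Pow {0,1,2} \<Longrightarrow> card T = p \<Longrightarrow> T \<in> TT"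
  shows "supported_on TT \<psi>"
  using assms of_type_p0_imp unfolding pq_form_def supported_on_def by blast

lemma H_Dol_p0_dform_vanishes:
  assumes "\<psi> \<in> H_Dol_p0 p" "of_type p 1 S \<or> of_type (p - 1) 2 S"
  shows "dform \<psi> S x = 0"
proof -
  have "proj p 1 (dform \<psi>) S x = 0" "proj (p - 1) 2 (dform \<psi>) S x = 0"
    using assms(1) by (simp_all add: H_Dol_p0_def dbar_def mubar_def numeral_2_eq_2)
  then show ?thesis using assms(2) by (auto simp: proj_def)
qed

lemma closed_pq_form_in_H_Dol_p0:
  assumes "pq_form p 0 \<omega>" "dform \<omega> = 0"
  shows "\<omega> \<in> H_Dol_p0 p"
  using assms by (simp add: H_Dol_p0_def dbar_def mubar_def proj_def fun_eq_iff)

lemma H_Dol_10_eq: "H_Dol_p0 1 = range (\<lambda>\<gamma>. cform \<gamma> (theta 2))"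
proof (intro equalityI subsetI)
  fix \<psi> assume \<psi>: "\<psi> \<in> H_Dol_p0 1"
  then have pq: "pq_form 1 0 \<psi>" by (simp add: H_Dol_p0_def)
  then have sp: "supported_on {{0},{1},{2}} \<psi>"
    by (rule supported_on_pq_form_p0) (auto simp: Pow_insert)
  have iw: "Iw_fun (\<psi> T)" for T using pq by (simp add: pq_form_def)
  have Z: "dform \<psi> S x = 0" if "S \<in> {{1,3},{1,4},{1,5},{2,3},{2,4},{2,5},{3,5}}" for S x
    using that by (intro H_Dol_p0_dform_vanishes[OF \<psi>]) (auto simp: of_type_def)
  note coeffs = dform_10_coeffs[OF sp]
  have m: "\<psi> {0} x = \<i> * \<psi> {1} x" for x
    using Z[of "{3,5}" x] coeffs(7)[of x] by (simp add: field_simps)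
  have "Zbar 0 (\<psi> {1}) x = 0" "Zbar 1 (\<psi> {1}) x = 0" "Zbar 2 (\<psi> {1}) x = 0" for x
    using Z[of "{1,3}" x] Z[of "{1,4}" x] Z[of "{1,5}" x] coeffs(1-3)[of x] m[of x]
    by (simp_all add: field_simps)
  then obtain \<beta> where \<beta>: "\<psi> {1} = (\<lambda>_. \<beta>)"
    by (rule Iw_fun_Zbar_zero_imp_constant[OF iw])
  have "Zbar 0 (\<psi> {2}) x = \<i> * \<beta> / 2" for x
    using Z[of "{2,3}" x] coeffs(4)[of x] m[of x] unfolding \<beta> by (simp add: field_simps)
  then have "\<i> * \<beta> / 2 = 0" by (rule Iw_fun_Zbar_constant_eq_zero[OF iw])
  then have \<beta>0: "\<psi> {1} = (\<lambda>_. 0)" using \<beta> by simp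
  have "Zbar 0 (\<psi> {2}) x = 0" "Zbar 1 (\<psi> {2}) x = 0" "Zbar 2 (\<psi> {2}) x = 0" for x
    using Z[of "{2,3}" x] Z[of "{2,4}" x] Z[of "{2,5}" x] coeffs(4-6)[of x] m[of x]
    unfolding \<beta>0 by (simp_all add: field_simps)
  then obtain \<gamma> where \<gamma>: "\<psi> {2} = (\<lambda>_. \<gamma>)"
    by (rule Iw_fun_Zbar_zero_imp_constant[OF iw])
  have "\<psi> S x = cform \<gamma> (theta 2) S x" for S x
  proof (cases "S \<in> {{0},{1},{2}}")
    case True
    then show ?thesis using m[of x] \<beta>0 \<gamma> by (auto simp: cform_def theta_def)
  next
    case False
    then show ?thesis using sp by (auto simp: supported_on_def cform_def theta_def)
  qed
  then have "\<psi> = cform \<gamma> (theta 2)" by blast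
  then show "\<psi> \<in> range (\<lambda>\<gamma>. cform \<gamma> (theta 2))" by blast
next
  fix \<omega> assume "\<omega> \<in> range (\<lambda>\<gamma>. cform \<gamma> (theta 2))"
  then obtain \<gamma> where \<omega>: "\<omega> = cform \<gamma> (theta 2)" by blast
  have "pq_form 1 0 \<omega>"
    by (auto simp: \<omega> pq_form_def of_type_def cform_def theta_def Iw_fun_const)
  then show "\<omega> \<in> H_Dol_p0 1"
    using dform_theta2_closed \<omega> by (simp add: closed_pq_form_in_H_Dol_p0)
qed

lemma H_Dol_20_eq: "H_Dol_p0 2 = range (\<lambda>\<gamma>. cform \<gamma> dol_20_generator)"
proof (intro equalityI subsetI)
  fix \<psi> assume \<psi>: "\<psi> \<in> H_Dol_p0 2"
  then have pq: "pq_form 2 0 \<psi>" by (simp add: H_Dol_p0_def)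
  then have sp: "supported_on {{0,1},{0,2},{1,2}} \<psi>"
    by (rule supported_on_pq_form_p0) (auto simp: Pow_insert)
  have iw: "Iw_fun (\<psi> T)" for T using pq by (simp add: pq_form_def)
  have Z: "dform \<psi> S x = 0" if "S \<in> {{1,2,3},{1,2,4},{1,2,5},{0,3,5},{2,3,5}}" for S x
    using that by (intro H_Dol_p0_dform_vanishes[OF \<psi>]) (auto simp: of_type_def)
  note coeffs = dform_20_coeffs[OF sp]
  have a0: "\<psi> {0,1} x = 0" for x
    using Z[of "{0,3,5}" x] coeffs(4)[of x] by simp
  have m: "\<psi> {0,2} x = \<i> * \<psi> {1,2} x" for x
    using Z[of "{2,3,5}" x] coeffs(5)[of x] by (simp add: field_simps)
  have "Zbar 0 (\<psi> {1,2}) x = 0" "Zbar 1 (\<psi> {1,2}) x = 0" "Zbar 2 (\<psi> {1,2}) x = 0" for x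
    using Z[of "{1,2,3}" x] Z[of "{1,2,4}" x] Z[of "{1,2,5}" x] coeffs(1-3)[of x] a0[of x] m[of x]
    by (simp_all add: field_simps)
  then obtain \<gamma> where \<gamma>: "\<psi> {1,2} = (\<lambda>_. \<gamma>)"
    by (rule Iw_fun_Zbar_zero_imp_constant[OF iw])
  have "\<psi> S x = cform \<gamma> dol_20_generator S x" for S x
  proof (cases "S \<in> {{0,1},{0,2},{1,2}}")
    case True
    then show ?thesis
      using a0[of x] m[of x] \<gamma> by (auto simp: cform_def dol_20_generator_apply insert_commute)
  next
    case False
    then show ?thesis using sp by (auto simp: supported_on_def cform_def dol_20_generator_apply)
  qed
  then have "\<psi> = cform \<gamma> dol_20_generator" by blast
  then show "\<psi> \<in> range (\<lambda>\<gamma>. cform \<gamma> dol_20_generator)" by blast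
next
  fix \<omega> assume "\<omega> \<in> range (\<lambda>\<gamma>. cform \<gamma> dol_20_generator)"
  then obtain \<gamma> where \<omega>: "\<omega> = cform \<gamma> dol_20_generator" by blast
  have "pq_form 2 0 \<omega>"
    by (auto simp: \<omega> pq_form_def of_type_def cform_def dol_20_generator_apply Iw_fun_const)
  then show "\<omega> \<in> H_Dol_p0 2"
    using dform_dol_20_generator_closed \<omega> by (simp add: closed_pq_form_in_H_Dol_p0)
qed

lemma H_Dol_30_eq: "H_Dol_p0 3 = {0}"
proof (intro equalityI subsetI)
  fix \<psi> assume \<psi>: "\<psi> \<in> H_Dol_p0 3"
  then have sp: "supported_on {{0,1,2}} \<psi>"
    by (intro supported_on_pq_form_p0[of 3]) (auto simp: H_Dol_p0_def Pow_insert)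
  have "dform \<psi> {0,2,3,5} x = 0" for x
    by (intro H_Dol_p0_dform_vanishes[OF \<psi>]) (simp add: of_type_def)
  then have "\<psi> {0,1,2} x = 0" for x using dform_30_coeff[OF sp] by simp
  then have "\<psi> S x = 0" for S x
    using sp by (cases "S = {0,1,2}") (auto simp: supported_on_def)
  then show "\<psi> \<in> {0}" by (simp add: fun_eq_iff)
next
  fix \<omega> :: form assume "\<omega> \<in> {0}"
  moreover have "dform 0 = 0"
    by (subst dform_constant_coeffs[where TT = "{}"]) (auto simp: supported_on_def)
  moreover have "pq_form 3 0 0"
    by (simp add: pq_form_def zero_fun_def Iw_fun_const)
  ultimately show "\<omega> \<in> H_Dol_p0 3" by (simp add: closed_pq_form_in_H_Dol_p0)
qed

lemma cf_dim_singleton: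
  assumes "v \<noteq> 0"
  shows "cf.dim {v} = 1"
proof -
  have "cf.independent {v}" using assms by (simp add: cf.independent_insert)
  then show ?thesis by (simp add: cf.dim_eq_card_independent)
qed

theorem mainTheorem11:
  shows "h_Dol_p0 1 = 1
       \<and> H_Dol_p0 1 = module.span cform {theta 2}
       \<and> h_Dol_p0 2 = 1
       \<and> H_Dol_p0 2 = module.span cform
            {cform \<i> (wedge (theta 0) (theta 2)) + wedge (theta 1) (theta 2)}
       \<and> h_Dol_p0 3 = 0"
proof -
  have H1: "H_Dol_p0 1 = cf.span {theta 2}"
    unfolding H_Dol_10_eq cf.span_singleton ..
  have H2: "H_Dol_p0 2 = cf.span {dol_20_generator}"
    unfolding H_Dol_20_eq cf.span_singleton ..
  have "theta 2 {2} 0 \<noteq> 0" "dol_20_generator {1,2} 0 \<noteq> 0"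
    by (simp_all add: theta_def dol_20_generator_apply)
  then have "theta 2 \<noteq> 0" "dol_20_generator \<noteq> 0" by auto
  then have "h_Dol_p0 1 = 1" "h_Dol_p0 2 = 1"
    unfolding h_Dol_p0_def H1 H2 cf.dim_span by (simp_all add: cf_dim_singleton)
  moreover have "h_Dol_p0 3 = 0"
    using cf.dim_span[of "{}"] cf.dim_eq_card_independent[OF cf.independent_empty]
    by (simp add: h_Dol_p0_def H_Dol_30_eq)
  ultimately show ?thesis
    using H1 H2 by (simp add: dol_20_generator_def)
qed

end
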